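(* Let $X$ be a real Banach space with $\dim X\ge 2$. If $S_P(X)<\frac{3-\sqrt5}{4}$, then $X$ has uniform normal structure.
   Context: For a real Banach space $X$ with unit sphere $S_X$, the P-angle constant is $S_P(X)=\sup\left\{\frac{\|x+y\|^2+\|x-y\|^2-4}{2\|x+y\|\,\|x-y\|}: x,y\in S_X,\ x\neq \pm y\right\}$. For a bounded closed convex $A\subseteq X$, $\operatorname{diam}A=\sup\{\|x-y\|:x,y\in A\}$ and the Chebyshev radius is $r(A)=\inf_{y\in A}\sup_{x\in A}\|x-y\|$. $X$ has uniform normal structure if $\inf\{\operatorname{diam}A/r(A)\}>1$, the infimum over all bounded closed convex subsets $A$ of $X$ with $\operatorname{diam}A>0$. *)

theory Defs
  imports "HOL-Analysis.Analysis"
begin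

definition P_angle_const :: "'a::real_normed_vector itself \<Rightarrow> real" where
  "P_angle_const (_::'a itself) =
     Sup {(norm (x + y)^2 + norm (x - y)^2 - 4) / (2 * norm (x + y) * norm (x - y)) | x y :: 'a.
            norm x = 1 \<and> norm y = 1 \<and> x \<noteq> y \<and> x \<noteq> - y}"

definition cheb_radius :: "'a::real_normed_vector set \<Rightarrow> real" where
  "cheb_radius A = (INF y\<in>A. SUP x\<in>A. norm (x - y))"

definition uniform_normal_structure :: "'a::real_normed_vector itself \<Rightarrow> bool" where
  "uniform_normal_structure (_::'a itself) \<longleftrightarrow>
     Inf {diameter A / cheb_radius A | A :: 'a set.
            bounded A \<and> closed A \<and> convex A \<and> diameter A > 0} > 1"

end

theory Submission
  imports Defs
begin

text \<open>
  If \<open>S\<^sub>P(X) \<le> t < 1/4\<close>, the angle inequality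
  \<open>\<parallel>x + y\<parallel>\<^sup>2 + \<parallel>x - y\<parallel>\<^sup>2 - 4 \<le> 2t \<parallel>x + y\<parallel> \<parallel>x - y\<parallel>\<close> on the unit sphere, transferred to the
  unit ball by normalising, shows that two points of the unit ball at distance at least
  \<open>(1 + 4t)/2 < 1\<close> have a midpoint of norm at most \<open>1 - (1 - 4t)/200\<close>; that is, the modulus
  of convexity is positive at some \<open>\<epsilon> < 1\<close>.  In a bounded convex set \<open>A\<close> of diameter \<open>d\<close>,
  take \<open>x, y \<in> A\<close> with \<open>\<parallel>x - y\<parallel> > \<epsilon> d\<close>: applied to \<open>(z - x)/d\<close> and \<open>(z - y)/d\<close>, this
  keeps every \<open>z \<in> A\<close> within \<open>c d\<close>, \<open>c < 1\<close>, of the midpoint of \<open>x\<close> and \<open>y\<close>.  Hence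
  \<open>r(A) \<le> c \<cdot> diam A\<close> uniformly in \<open>A\<close>.  The hypothesis \<open>S\<^sub>P(X) < (3 - \<surd>5)/4\<close> is only
  used through \<open>S\<^sub>P(X) < 1/4\<close>.
\<close>

lemma P_angle_value_le_one:
  fixes x y :: "'a::real_normed_vector"
  assumes "norm x = 1" "norm y = 1" "x \<noteq> y" "x \<noteq> - y"
  shows "(norm (x + y)^2 + norm (x - y)^2 - 4) / (2 * norm (x + y) * norm (x - y)) \<le> 1"
proof -
  have a: "0 < norm (x + y)" "norm (x + y) \<le> 2"
    using assms norm_triangle_ineq[of x y] by (auto simp: add_eq_0_iff2)
  have b: "0 < norm (x - y)" "norm (x - y) \<le> 2"
    using assms norm_triangle_ineq4[of x y] by auto
  have "\<bar>norm (x + y) - norm (x - y)\<bar> \<le> 2" using a b by linarith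
  hence "\<bar>norm (x + y) - norm (x - y)\<bar>^2 \<le> 2^2" by (intro power_mono) auto
  hence "norm (x + y)^2 + norm (x - y)^2 - 4 \<le> 2 * norm (x + y) * norm (x - y)"
    by (simp add: power2_diff)
  thus ?thesis using a b by simp
qed

lemma P_angle_value_le_P_angle_const:
  fixes x y :: "'a::real_normed_vector"
  assumes "norm x = 1" "norm y = 1" "x \<noteq> y" "x \<noteq> - y"
  shows "(norm (x + y)^2 + norm (x - y)^2 - 4) / (2 * norm (x + y) * norm (x - y))
          \<le> P_angle_const TYPE('a)"
  unfolding P_angle_const_def
  by (rule cSup_upper) (use assms in \<open>auto intro!: bdd_aboveI[where M = 1] P_angle_value_le_one\<close>)

lemma norm_add_diff_sq_le_P_angle_const:
  fixes x y :: "'a::real_normed_vector"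
  assumes x: "norm x = 1" and y: "norm y = 1" and t: "P_angle_const TYPE('a) \<le> t"
  shows "norm (x + y)^2 + norm (x - y)^2 - 4 \<le> 2 * t * norm (x + y) * norm (x - y)"
proof (cases "x = y \<or> x = - y")
  case True
  have "norm (y + y) = 2" using y by (simp flip: scaleR_2)
  moreover have "norm (- y - y) = norm (y + y)" by (metis norm_minus_commute diff_minus_eq_add)
  ultimately show ?thesis using True by auto
next
  case False
  then have "0 < 2 * norm (x + y) * norm (x - y)" by (auto simp: add_eq_0_iff2)
  moreover have "(norm (x + y)^2 + norm (x - y)^2 - 4) / (2 * norm (x + y) * norm (x - y)) \<le> t"
    using P_angle_value_le_P_angle_const[OF x y] False t by force
  ultimately show ?thesis by (simp add: divide_le_eq mult.commute mult.left_commute)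
qed

lemma norm_sgn_diff:
  fixes u :: "'a::real_normed_vector"
  assumes "u \<noteq> 0"
  shows "norm (sgn u - u) = \<bar>1 - norm u\<bar>"
proof -
  have "sgn u - u = (1 / norm u - 1) *\<^sub>R u"
    by (simp add: sgn_div_norm inverse_eq_divide algebra_simps)
  hence "norm (sgn u - u) = \<bar>(1 / norm u - 1) * norm u\<bar>" by (simp add: abs_mult)
  also have "\<dots> = \<bar>1 - norm u\<bar>" using assms by (simp add: algebra_simps)
  finally show ?thesis .
qed

text \<open>
  \<open>a\<close> and \<open>b\<close> stand for \<open>\<parallel>x + y\<parallel>\<close> and \<open>\<parallel>x - y\<parallel>\<close> for the normalised points;
  \<open>g/100\<close> bounds the distance lost in normalising each point.
\<close>
lemma P_angle_margin_contradiction: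
  fixes a b t :: real
  defines "g \<equiv> 1 - 4 * t"
  assumes t: "0 \<le> t" "t < 1/4" and a: "a \<le> 2" "2 - 3 * (g/100) < a"
    and b: "1 - g/2 - 2 * (g/100) \<le> b"
    and angle: "a\<^sup>2 + b\<^sup>2 - 4 \<le> 2 * t * a * b"
  shows False
proof -
  have g: "0 < g" "g \<le> 1" using t by (auto simp: g_def)
  have "4 - 12 * (g/100) \<le> (2 - 3 * (g/100))\<^sup>2" by (simp add: power2_diff)
  also have "\<dots> \<le> a\<^sup>2" using a g by (intro power_mono) auto
  finally have "4 - 12 * (g/100) \<le> a\<^sup>2" .
  moreover have "2 * t * a * b \<le> 4 * t * b"
    using mult_left_mono[OF a(1), of "2 * t * b"] t b g by (simp add: algebra_simps)
  ultimately have upper: "b * (b - 4 * t) \<le> 12 * (g/100)"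
    using angle by (simp add: power2_eq_square algebra_simps)
  have "1 - 13/25 * g \<le> b" using b by linarith
  hence "(1 - 13/25 * g) * (12/25 * g) \<le> b * (b - 4 * t)"
    using g unfolding g_def by (intro mult_mono) (auto simp: field_simps)
  moreover have "12 * (g/100) < (1 - 13/25 * g) * (12/25 * g)"
    using g by (simp add: algebra_simps)
  ultimately show False using upper by linarith
qed

lemma norm_add_le_of_P_angle_const:
  fixes u v :: "'a::real_normed_vector" and t :: real
  defines "g \<equiv> 1 - 4 * t"
  assumes S: "P_angle_const TYPE('a) \<le> t" and t: "0 \<le> t" "t < 1/4"
    and u: "norm u \<le> 1" and v: "norm v \<le> 1" and uv: "1 - g/2 \<le> norm (u - v)"
  shows "norm (u + v) \<le> 2 - g/100"
proof (rule ccontr)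
  assume "\<not> ?thesis"
  hence uv_large: "2 - g/100 < norm (u + v)" by simp
  have g: "0 < g" "g \<le> 1" using t by (auto simp: g_def)
  have "norm (u + v) \<le> norm u + norm v" by (rule norm_triangle_ineq)
  hence nu: "1 - g/100 < norm u" and nv: "1 - g/100 < norm v"
    using uv_large u v by linarith+
  define x where "x = sgn u"
  define y where "y = sgn v"
  have u0: "u \<noteq> 0" and v0: "v \<noteq> 0" using nu nv g by auto
  have x: "norm x = 1" and y: "norm y = 1" using u0 v0 by (simp_all add: x_def y_def norm_sgn)
  have xu: "norm (x - u) < g/100" and yv: "norm (y - v) < g/100"
    using norm_sgn_diff[OF u0] norm_sgn_diff[OF v0] nu nv u v by (simp_all add: x_def y_def)
  have "norm (u + v) \<le> norm (x + y) + norm (x - u) + norm (y - v)"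
    using norm_triangle_ineq4[of "x + y" "(x - u) + (y - v)"] norm_triangle_ineq[of "x - u" "y - v"]
    by (simp add: algebra_simps)
  hence a: "2 - 3 * (g/100) < norm (x + y)" using uv_large xu yv by linarith
  have "norm (u - v) \<le> norm (x - y) + norm (x - u) + norm (y - v)"
    using norm_triangle_ineq4[of "x - y" "(x - u) - (y - v)"] norm_triangle_ineq4[of "x - u" "y - v"]
    by (simp add: algebra_simps)
  hence b: "1 - g/2 - 2 * (g/100) \<le> norm (x - y)" using uv xu yv by linarith
  have "norm (x + y) \<le> 2" using norm_triangle_ineq[of x y] x y by simp
  then show False
    using P_angle_margin_contradiction[OF t _ a[unfolded g_def] b[unfolded g_def]]
      norm_add_diff_sq_le_P_angle_const[OF x y S] by blast
qed

lemma bounded_bdd_above_norm_diff: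
  fixes A :: "'a::real_normed_vector set"
  assumes "bounded A"
  shows "bdd_above ((\<lambda>z. norm (z - w)) ` A)"
proof -
  obtain r where "\<forall>z\<in>A. dist w z \<le> r" using assms unfolding bounded_any_center[of A w] by blast
  then show ?thesis by (intro bdd_aboveI2[where M = r]) (simp add: dist_norm norm_minus_commute)
qed

lemma cheb_radius_le:
  fixes A :: "'a::real_normed_vector set"
  assumes A: "bounded A" and m: "m \<in> A" and r: "\<And>z. z \<in> A \<Longrightarrow> norm (z - m) \<le> r"
  shows "cheb_radius A \<le> r"
proof -
  have "cheb_radius A \<le> (SUP z\<in>A. norm (z - m))"
    unfolding cheb_radius_def
    by (rule cINF_lower[OF _ m], rule bdd_belowI[where m = 0])
       (auto intro: cSUP_upper2[OF bounded_bdd_above_norm_diff[OF A] _ norm_ge_zero])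
  also have "\<dots> \<le> r" using m r by (intro cSUP_least) auto
  finally show ?thesis .
qed

lemma diameter_le_cheb_radius:
  fixes A :: "'a::real_normed_vector set"
  assumes A: "bounded A" "A \<noteq> {}"
  shows "diameter A \<le> 2 * cheb_radius A"
proof -
  have "diameter A \<le> 2 * (SUP z\<in>A. norm (z - w))" if w: "w \<in> A" for w
  proof (rule diameter_le)
    show "A \<noteq> {} \<or> 0 \<le> 2 * (SUP z\<in>A. norm (z - w))" using A by simp
    fix p q assume pq: "p \<in> A" "q \<in> A"
    have "norm (p - q) \<le> norm (p - w) + norm (q - w)"
      using norm_triangle_ineq4[of "p - w" "q - w"] by simp
    also have "\<dots> \<le> 2 * (SUP z\<in>A. norm (z - w))"
      using cSUP_upper[OF pq(1) bounded_bdd_above_norm_diff[OF A(1), of w]]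
        cSUP_upper[OF pq(2) bounded_bdd_above_norm_diff[OF A(1), of w]] by simp
    finally show "norm (p - q) \<le> 2 * (SUP z\<in>A. norm (z - w))" .
  qed
  then have "diameter A / 2 \<le> cheb_radius A"
    unfolding cheb_radius_def by (intro cINF_greatest[OF A(2)]) (simp add: mult.commute)
  then show ?thesis by simp
qed

lemma norm_diff_midpoint_le:
  fixes x y z :: "'a::real_normed_vector"
  assumes modulus: "\<And>u v :: 'a. norm u \<le> 1 \<Longrightarrow> norm v \<le> 1 \<Longrightarrow> e \<le> norm (u - v) \<Longrightarrow> norm (u + v) \<le> 2 * c"
    and d: "0 < d" and zx: "norm (z - x) \<le> d" and zy: "norm (z - y) \<le> d"
    and xy: "e * d \<le> norm (x - y)"
  shows "norm (z - midpoint x y) \<le> c * d"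
proof -
  define u where "u = (1/d) *\<^sub>R (z - x)"
  define v where "v = (1/d) *\<^sub>R (z - y)"
  have "norm u \<le> 1" "norm v \<le> 1"
    using zx zy d unfolding u_def v_def norm_scaleR by simp_all
  moreover have "u - v = (1/d) *\<^sub>R (y - x)" by (simp add: u_def v_def algebra_simps)
  hence "norm (u - v) = norm (x - y) / d" using d by (simp add: norm_minus_commute)
  hence "e \<le> norm (u - v)" using xy d by (simp add: pos_le_divide_eq)
  ultimately have "norm (u + v) \<le> 2 * c" by (rule modulus)
  moreover have "u + v = (2/d) *\<^sub>R (z - midpoint x y)"
  proof -
    have "(z - x) + (z - y) = 2 *\<^sub>R (z - midpoint x y)"
      by (simp add: midpoint_def algebra_simps scaleR_2)
    then show ?thesis unfolding u_def v_def scaleR_right_distrib[symmetric] by simp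
  qed
  ultimately have "2/d * norm (z - midpoint x y) \<le> 2 * c"
    using d by (metis norm_scaleR abs_of_pos divide_pos_pos zero_less_numeral)
  then show ?thesis using d by (simp add: field_simps)
qed

lemma cheb_radius_le_mult_diameter:
  fixes A :: "'a::real_normed_vector set"
  assumes modulus: "\<And>u v :: 'a. norm u \<le> 1 \<Longrightarrow> norm v \<le> 1 \<Longrightarrow> e \<le> norm (u - v) \<Longrightarrow> norm (u + v) \<le> 2 * c"
    and e: "0 < e" "e < 1" and A: "bounded A" "convex A" "0 < diameter A"
  shows "cheb_radius A \<le> c * diameter A"
proof -
  have "0 < e * diameter A" "e * diameter A < diameter A" using e A(3) by auto
  then obtain x y where xy: "x \<in> A" "y \<in> A" "e * diameter A < dist x y"
    using diameter_bounded(2)[OF A(1)] by blast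
  have "midpoint x y \<in> A"
    using convex_contains_segment[of A] A(2) xy midpoint_in_closed_segment by blast
  moreover have "norm (z - midpoint x y) \<le> c * diameter A" if "z \<in> A" for z
    using norm_diff_midpoint_le[OF modulus A(3)] diameter_bounded(1)[OF A(1)] xy that
    by (simp add: dist_norm)
  ultimately show ?thesis by (rule cheb_radius_le[OF A(1)])
qed

lemma uniform_normal_structureI:
  fixes x :: "'a::real_normed_vector"
  assumes x: "x \<noteq> 0" and c: "0 < c" "c < 1"
    and r: "\<And>A :: 'a set. bounded A \<Longrightarrow> convex A \<Longrightarrow> 0 < diameter A \<Longrightarrow> cheb_radius A \<le> c * diameter A"
  shows "uniform_normal_structure TYPE('a)"
proof -
  define S where "S = {diameter A / cheb_radius A | A :: 'a set.
                         bounded A \<and> closed A \<and> convex A \<and> diameter A > 0}"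
  have "0 < dist 0 x" using x by simp
  also have "\<dots> \<le> diameter (closed_segment 0 x)"
    by (rule diameter_bounded_bound) (auto simp: bounded_closed_segment)
  finally have "0 < diameter (closed_segment 0 x)" .
  hence "S \<noteq> {}" unfolding S_def
    by (auto intro!: exI[where x = "closed_segment 0 x"] simp: bounded_closed_segment)
  moreover have "1 / c \<le> q" if "q \<in> S" for q
  proof -
    obtain A :: "'a set" where A: "bounded A" "convex A" "0 < diameter A"
      and q: "q = diameter A / cheb_radius A"
      using \<open>q \<in> S\<close> unfolding S_def by blast
    have "A \<noteq> {}" using A(3) by auto
    hence "0 < cheb_radius A" using diameter_le_cheb_radius[OF A(1)] A(3) by linarith
    have "1 / c = diameter A / (c * diameter A)" using A(3) by simp
    also have "\<dots> \<le> q"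
      unfolding q using r[OF A] \<open>0 < cheb_radius A\<close> A(3) by (intro divide_left_mono) auto
    finally show ?thesis .
  qed
  ultimately have "1 / c \<le> Inf S" by (rule cInf_greatest)
  moreover have "1 < 1 / c" using c by simp
  ultimately show ?thesis unfolding uniform_normal_structure_def S_def[symmetric] by linarith
qed

theorem theorem5p4:
  assumes dim2: "\<exists>x y :: 'a::banach. x \<noteq> y \<and> independent {x, y}"
    and SP: "P_angle_const TYPE('a) < (3 - sqrt 5) / 4"
  shows "uniform_normal_structure TYPE('a)"
proof -
  obtain x :: 'a where "x \<noteq> 0" using dim2 by (metis dependent_zero insertCI)
  text \<open>Taking \<open>max\<close> with \<open>0\<close> spares us proving \<open>0 \<le> S\<^sub>P(X)\<close>.\<close>
  define t where "t = max (P_angle_const TYPE('a)) 0"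
  have "2 < sqrt 5" by (rule real_less_rsqrt) simp
  hence t: "P_angle_const TYPE('a) \<le> t" "0 \<le> t" "t < 1/4" using SP by (auto simp: t_def)
  show ?thesis
  proof (rule uniform_normal_structureI[OF \<open>x \<noteq> 0\<close>])
    show "0 < 1 - (1 - 4*t)/200" "1 - (1 - 4*t)/200 < 1" using t by auto
    fix A :: "'a set"
    assume "bounded A" "convex A" "0 < diameter A"
    moreover have "norm (u + v) \<le> 2 * (1 - (1 - 4*t)/200)"
      if "norm u \<le> 1" "norm v \<le> 1" "1 - (1 - 4*t)/2 \<le> norm (u - v)" for u v :: 'a
      using norm_add_le_of_P_angle_const[OF t that] by (simp add: field_simps)
    moreover have "0 < 1 - (1 - 4*t)/2" "1 - (1 - 4*t)/2 < 1" using t by auto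
    ultimately show "cheb_radius A \<le> (1 - (1 - 4*t)/200) * diameter A"
      by (intro cheb_radius_le_mult_diameter[where e = "1 - (1 - 4*t)/2"])
  qed
qed

end
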